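(* Let $n\ge 2$ and let $(a_1,a_2,\dots,a_n)\in\mathbb{N}^n$ with $a_1\ge 2$. Choose a prime $\ell>\max\{a_1,\dots,a_n\}$ and write its base-$a_1$ expansion as \[ \ell=c_d a_1^{d-1}+c_{d-1}a_1^{d-2}+\cdots+c_2a_1+c_1,\qquad 0\le c_i<a_1. \] For each $2\le k\le n$ define \[ \mathcal{P}_k(x)=\frac{a_k}{\ell\,a_1}\,x\,\bigl(c_d x^{d-1}+c_{d-1}x^{d-2}+\cdots+c_1\bigr), \] and consider the curve $\Gamma:[0,a_1]\to\mathbb{R}^n$, $\Gamma(x)=\bigl(x,\mathcal{P}_2(x),\mathcal{P}_3(x),\dots,\mathcal{P}_n(x)\bigr)$. Then: (a) $\Gamma(0)=(0,0,\dots,0)$ and $\Gamma(a_1)=(a_1,a_2,\dots,a_n)$; (b) for every integer $1\le x\le a_1-1$, none of the values $\mathcal{P}_k(x)$ ($2\le k\le n$) is an integer; hence $\Gamma$ meets no lattice point of $\mathbb{Z}^n$ other than $\Gamma(0)$ and $\Gamma(a_1)$.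
   Context: $\mathbb{N}$ denotes the positive integers. *)

theory Defs
  imports Complex_Main "HOL-Computational_Algebra.Primes"
begin

definition Pk :: "(nat \<Rightarrow> nat) \<Rightarrow> nat \<Rightarrow> (nat \<Rightarrow> nat) \<Rightarrow> nat \<Rightarrow> nat \<Rightarrow> real \<Rightarrow> real" where
  "Pk a l c d k x = real (a k) / (real l * real (a 1)) * x * (\<Sum>i=1..d. real (c i) * x ^ (i - 1))"

definition Gamma :: "(nat \<Rightarrow> nat) \<Rightarrow> nat \<Rightarrow> (nat \<Rightarrow> nat) \<Rightarrow> nat \<Rightarrow> real \<Rightarrow> nat \<Rightarrow> real" where
  "Gamma a l c d x i = (if i = 1 then x else Pk a l c d i x)"

end

theory Submission
  imports Defs
begin

text \<open>Write \<open>S(x) = \<Sum>\<^sub>i c\<^sub>i x\<^sup>i\<^sup>-\<^sup>1\<close>, so that \<open>S(a\<^sub>1) = l\<close> and \<open>P\<^sub>k(x) = a\<^sub>k x S(x) / (l a\<^sub>1)\<close>.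
  Since \<open>a\<^sub>1 < l\<close>, some digit \<open>c\<^sub>j\<close> with \<open>j \<ge> 2\<close> is nonzero, so \<open>S\<close> is strictly increasing
  on the naturals; for an integer \<open>0 < x < a\<^sub>1\<close> this gives \<open>0 < S(x) < l\<close>. Then the prime \<open>l\<close>
  divides none of \<open>a\<^sub>k\<close>, \<open>x\<close>, \<open>S(x)\<close>, hence not their product, and \<open>P\<^sub>k(x)\<close> is not an integer.\<close>

lemma of_nat_div_of_nat_in_Ints_iff:
  "(of_nat n / of_nat m :: 'a :: {division_ring,ring_char_0}) \<in> \<int> \<longleftrightarrow> m = 0 \<or> m dvd n"
  using of_int_div_of_int_in_Ints_iff[of "int n" "int m"] by simp

lemma Pk_of_nat:
  "Pk a l c d k (real x) = real (a k * x * (\<Sum>i=1..d. c i * x ^ (i - 1))) / real (l * a 1)"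
  unfolding Pk_def by (simp add: of_nat_sum)

lemma Pk_at_base:
  assumes "l = (\<Sum>i=1..d. c i * a 1 ^ (i - 1))" and "0 < l" and "0 < a 1"
  shows "Pk a l c d k (real (a 1)) = real (a k)"
  using Pk_of_nat[of a l c d k "a 1"] assms unfolding assms(1)[symmetric]
  by (simp add: field_simps)

lemma expansion_has_high_digit:
  fixes b :: nat
  assumes "0 < b" and "\<forall>i\<in>{1..d}. c i < b" and "b \<le> (\<Sum>i=1..d. c i * b ^ (i - 1))"
  shows "\<exists>j\<in>{2..d}. 0 < c j"
proof (rule ccontr)
  assume "\<not> ?thesis"
  then have high_zero: "\<forall>j\<in>{2..d}. c j = 0" by auto
  show False
  proof (cases "d = 0")
    case False
    then have "{1..d} = insert 1 {2..d}" by auto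
    then have "(\<Sum>i=1..d. c i * b ^ (i - 1)) = c 1"
      using high_zero by simp
    moreover have "c 1 < b" using assms(2) False by simp
    ultimately show False using assms(3) by linarith
  qed (use assms in simp)
qed

lemma digit_sum_strict_mono:
  fixes x y :: nat
  assumes "x < y" and "j \<in> {2..d}" and "0 < c j"
  shows "(\<Sum>i=1..d. c i * x ^ (i - 1)) < (\<Sum>i=1..d. c i * y ^ (i - 1))"
proof (rule sum_strict_mono_ex1)
  show "\<forall>i\<in>{1..d}. c i * x ^ (i - 1) \<le> c i * y ^ (i - 1)"
    using assms(1) by (auto intro!: mult_left_mono power_mono)
  have "x ^ (j - 1) < y ^ (j - 1)"
    using assms by (intro power_strict_mono) auto
  then show "\<exists>i\<in>{1..d}. c i * x ^ (i - 1) < c i * y ^ (i - 1)"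
    using assms by (intro bexI[of _ j]) auto
qed simp

lemma digit_sum_pos:
  fixes x :: nat
  assumes "0 < x" and "j \<in> {1..d}" and "0 < c j"
  shows "0 < (\<Sum>i=1..d. c i * x ^ (i - 1))"
proof -
  have "0 < c j * x ^ (j - 1)" using assms by simp
  also have "\<dots> \<le> (\<Sum>i=1..d. c i * x ^ (i - 1))"
    using assms(2) by (intro member_le_sum) auto
  finally show ?thesis .
qed

lemma Pk_not_Int:
  fixes x :: int
  assumes "prime l" and "0 < a k" "a k < l" and "0 < x" "x < int (a 1)" "a 1 < l"
    and "l = (\<Sum>i=1..d. c i * a 1 ^ (i - 1))"
    and "j \<in> {2..d}" "0 < c j"
  shows "Pk a l c d k (of_int x) \<notin> \<int>"
proof
  obtain m where m: "x = int m" "0 < m" "m < a 1"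
    using assms(4,5) by (metis of_nat_0_less_iff of_nat_less_iff pos_int_cases)
  define S where "S = (\<Sum>i=1..d. c i * m ^ (i - 1))"
  have "0 < S" "S < l"
    using digit_sum_pos[of m j d c] digit_sum_strict_mono[of m "a 1" j d c] assms m
    by (auto simp: S_def)
  have "\<not> l dvd a k * m * S"
  proof
    assume "l dvd a k * m * S"
    then have "l dvd a k \<or> l dvd m \<or> l dvd S"
      using \<open>prime l\<close> by (simp add: prime_dvd_mult_iff)
    then show False
      using assms m \<open>0 < S\<close> \<open>S < l\<close> by (auto dest: dvd_imp_le)
  qed
  moreover assume "Pk a l c d k (of_int x) \<in> \<int>"
  then have "l * a 1 dvd a k * m * S"
    using \<open>prime l\<close> m
    unfolding m(1) of_int_of_nat_eq Pk_of_nat S_def[symmetric] of_nat_div_of_nat_in_Ints_iff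
    by (auto simp: not_prime_0)
  ultimately show False
    using dvd_mult_left by blast
qed

lemma Gamma_lattice_point_at_ends:
  assumes "2 \<le> n"
    and "\<forall>x::int. 1 \<le> x \<and> x \<le> int (a 1) - 1 \<longrightarrow> Pk a l c d 2 (of_int x) \<notin> \<int>"
    and "0 \<le> t" "t \<le> real (a 1)" and lattice: "\<forall>i\<in>{1..n}. Gamma a l c d t i \<in> \<int>"
  shows "t = 0 \<or> t = real (a 1)"
proof -
  obtain x where x: "t = of_int x"
    using bspec[OF lattice, of 1] assms(1) by (auto simp: Gamma_def elim: Ints_cases)
  have "Pk a l c d 2 (of_int x) \<in> \<int>"
    using bspec[OF lattice, of 2] assms(1) by (simp add: Gamma_def x)
  then have "\<not> (1 \<le> x \<and> x \<le> int (a 1) - 1)"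
    using assms(2) by auto
  moreover have "0 \<le> x" "x \<le> int (a 1)"
    using assms(3,4) unfolding x by linarith+
  ultimately show ?thesis
    using x by auto
qed

theorem lemma2p2:
  fixes n :: nat and a :: "nat \<Rightarrow> nat" and l :: nat and c :: "nat \<Rightarrow> nat" and d :: nat
  assumes n2: "n \<ge> 2"
    and apos: "\<forall>i\<in>{1..n}. a i \<ge> 1"
    and a1: "a 1 \<ge> 2"
    and lprime: "prime l"
    and lbig: "\<forall>i\<in>{1..n}. a i < l"
    and digits: "\<forall>i\<in>{1..d}. c i < a 1"
    and expansion: "l = (\<Sum>i=1..d. c i * a 1 ^ (i - 1))"
  shows "(\<forall>i\<in>{1..n}. Gamma a l c d 0 i = 0)
       \<and> (\<forall>i\<in>{1..n}. Gamma a l c d (real (a 1)) i = real (a i))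
       \<and> (\<forall>x::int. 1 \<le> x \<and> x \<le> int (a 1) - 1 \<longrightarrow>
            (\<forall>k\<in>{2..n}. Pk a l c d k (real_of_int x) \<notin> \<int>))
       \<and> (\<forall>t::real. 0 \<le> t \<and> t \<le> real (a 1) \<and> (\<forall>i\<in>{1..n}. Gamma a l c d t i \<in> \<int>)
            \<longrightarrow> t = 0 \<or> t = real (a 1))"
proof -
  have "a 1 < l" using lbig n2 by auto
  then obtain j where j: "j \<in> {2..d}" "0 < c j"
    using expansion_has_high_digit[of "a 1" d c] a1 digits expansion by auto
  have not_Int: "Pk a l c d k (of_int x) \<notin> \<int>"
    if "k \<in> {2..n}" "1 \<le> x" "x \<le> int (a 1) - 1" for k and x :: int
    using that bspec[OF apos, of k] bspec[OF lbig, of k]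
    by (intro Pk_not_Int[where a = a, OF lprime _ _ _ _ \<open>a 1 < l\<close> expansion j]) auto
  have "Gamma a l c d 0 i = 0" for i
    by (simp add: Gamma_def Pk_def)
  moreover have "Gamma a l c d (real (a 1)) i = real (a i)" for i
    using Pk_at_base[where a = a, OF expansion] prime_gt_0_nat[OF lprime] a1 by (simp add: Gamma_def)
  moreover have "t = 0 \<or> t = real (a 1)"
    if "0 \<le> t" "t \<le> real (a 1)" "\<forall>i\<in>{1..n}. Gamma a l c d t i \<in> \<int>" for t
    using Gamma_lattice_point_at_ends[where a = a, OF n2 _ that] not_Int n2 by auto
  ultimately show ?thesis
    using not_Int by blast
qed

end
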